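(* Let $\gamma_\sigma=(\{a,b\},\emptyset,\emptyset,\{(a,b,a)\})$ be the GES on two distinct events with no conflicts, no initial causes, and where the occurrence of $b$ adds $a$ as a cause of $a$ (so $\mathrm{Traces}(\gamma_\sigma)=\{\epsilon,a,b,ab\}$). Then there is no SES $\sigma$ with $\mathrm{Traces}(\sigma)=\mathrm{Traces}(\gamma_\sigma)$.
   Context: GES: $\gamma=(E,\#,\to,\lhd)$ with $\#\subseteq E^2$ irreflexive symmetric, $\to\subseteq E^2$, $\lhd\subseteq E^3$ where $(c,m,t)\in\lhd$ means "$m$ adds $c$ as a cause of $t$", requiring $\neg(c\to t)$. $\mathrm{ic}(e)=\{e'\mid e'\to e\}$, $\mathrm{ac}(H,e)=\{e'\mid\exists x\in H.(e',x,e)\in\lhd\}$. For $t=e_1\cdots e_n$, $\overline{t_k}=\{e_1,\ldots,e_k\}$. GES traces: finite sequences of pairwise distinct events, pairwise not in conflict, with $\mathrm{ic}(e_i)\cup\mathrm{ac}(\overline{t_{i-1}},e_i)\subseteq\overline{t_{i-1}}$ for all $i$. SES: $\sigma=(E,\#,\to,\triangleright)$ with $\#\subseteq E^2$ irreflexive symmetric, $\to\subseteq E^2$ a binary relation, $\triangleright\subseteq E^3$ with $(c,d,t)\in\triangleright$ ("$d$ drops cause $c$ of $t$") implying $c\to t$. $\mathrm{dc}(H,e)=\{e'\mid\exists d\in H.(e',d,e)\in\triangleright\}$. SES traces: finite sequences of pairwise distinct events of $E$, pairwise not in conflict, with $\mathrm{ic}(e_i)\setminus\mathrm{dc}(\overline{t_{i-1}},e_i)\subseteq\overline{t_{i-1}}$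 for all $i$. *)

theory Defs
  imports Main
begin

text \<open>A GES is a tuple (E, conf, ic, add): conflict relation, initial causality
and adding relation; (c,m,t) in add means m adds c as a cause of t.\<close>

type_synonym 'e ges = "'e set \<times> ('e \<times> 'e) set \<times> ('e \<times> 'e) set \<times> ('e \<times> 'e \<times> 'e) set"

definition is_GES :: "'e ges \<Rightarrow> bool" where
  "is_GES g \<longleftrightarrow> (case g of (E, C, R, A) \<Rightarrow>
     C \<subseteq> E \<times> E \<and> (\<forall>x. (x, x) \<notin> C) \<and> sym C \<and>
     R \<subseteq> E \<times> E \<and> A \<subseteq> E \<times> E \<times> E \<and>
     (\<forall>c m t. (c, m, t) \<in> A \<longrightarrow> (c, t) \<notin> R))"

definition ic :: "('e \<times> 'e) set \<Rightarrow> 'e \<Rightarrow> 'e set" where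
  "ic R e = {e'. (e', e) \<in> R}"

definition ac :: "('e \<times> 'e \<times> 'e) set \<Rightarrow> 'e set \<Rightarrow> 'e \<Rightarrow> 'e set" where
  "ac A H e = {e'. \<exists>x\<in>H. (e', x, e) \<in> A}"

definition GES_traces :: "'e ges \<Rightarrow> 'e list set" where
  "GES_traces g = (case g of (E, C, R, A) \<Rightarrow>
     {t. distinct t \<and> set t \<subseteq> E \<and>
         (\<forall>i<length t. \<forall>j<length t. (t ! i, t ! j) \<notin> C) \<and>
         (\<forall>i<length t. ic R (t ! i) \<union> ac A (set (take i t)) (t ! i) \<subseteq> set (take i t))})"

text \<open>(c,d,t) in D means d drops cause c of t.\<close>

type_synonym 'e ses = "'e set \<times> ('e \<times> 'e) set \<times> ('e \<times> 'e) set \<times> ('e \<times> 'e \<times> 'e) set"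

definition is_SES :: "'e ses \<Rightarrow> bool" where
  "is_SES s \<longleftrightarrow> (case s of (E, C, R, D) \<Rightarrow>
     C \<subseteq> E \<times> E \<and> (\<forall>x. (x, x) \<notin> C) \<and> sym C \<and>
     R \<subseteq> E \<times> E \<and> D \<subseteq> E \<times> E \<times> E \<and>
     (\<forall>c d t. (c, d, t) \<in> D \<longrightarrow> (c, t) \<in> R))"

definition dc :: "('e \<times> 'e \<times> 'e) set \<Rightarrow> 'e set \<Rightarrow> 'e \<Rightarrow> 'e set" where
  "dc D H e = {e'. \<exists>d\<in>H. (e', d, e) \<in> D}"

definition SES_traces :: "'e ses \<Rightarrow> 'e list set" where
  "SES_traces s = (case s of (E, C, R, D) \<Rightarrow>
     {t. distinct t \<and> set t \<subseteq> E \<and>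
         (\<forall>i<length t. \<forall>j<length t. (t ! i, t ! j) \<notin> C) \<and>
         (\<forall>i<length t. ic R (t ! i) - dc D (set (take i t)) (t ! i) \<subseteq> set (take i t))})"

end

theory Submission
  imports Defs
begin

text \<open>In the GES, b must not precede a, since b adds a as a cause of a itself; so
the traces are those of length at most two except ba. In an SES, the singleton traces
a and b force a and b to have no initial causes, and ab rules out a conflict between
them; then nothing can prevent ba. Causality that is only ever dropped cannot
express an order that is created.\<close>

lemma distinct_list_in_pair:
  assumes "distinct t" "set t \<subseteq> {a, b}"
  shows "t = [] \<or> t = [a] \<or> t = [b] \<or> t = [a, b] \<or> t = [b, a]"
proof -
  have "length t \<le> card {a, b}"
    using assms by (metis List.finite_set card_mono distinct_card finite.emptyI finite.insertI)
  also have "\<dots> \<le> 2" by (simp add: card_insert_le_m1)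
  finally have "length t \<le> 2" .
  then consider "t = []" | x where "t = [x]" | x y where "t = [x, y]"
    by (metis One_nat_def Suc_1 le_Suc_eq le_zero_eq length_0_conv length_Suc_conv)
  then show ?thesis
    using assms by cases auto
qed

lemma GES_traces_self_added_cause:
  assumes "a \<noteq> b"
  shows "GES_traces ({a, b}, {}, {}, {(a, b, a)}) = {[], [a], [b], [a, b]}"
proof
  show "GES_traces ({a, b}, {}, {}, {(a, b, a)}) \<subseteq> {[], [a], [b], [a, b]}"
  proof
    fix t assume t: "t \<in> GES_traces ({a, b}, {}, {}, {(a, b, a)})"
    then have "distinct t" "set t \<subseteq> {a, b}"
      by (auto simp: GES_traces_def)
    moreover have "t \<noteq> [b, a]"
    proof
      assume "t = [b, a]"
      with t have "ac {(a, b, a)} {b} a \<subseteq> {b}"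
        by (simp add: GES_traces_def All_less_Suc)
      with assms show False by (auto simp: ac_def)
    qed
    ultimately show "t \<in> {[], [a], [b], [a, b]}"
      using distinct_list_in_pair[of t a b] by simp
  qed
  show "{[], [a], [b], [a, b]} \<subseteq> GES_traces ({a, b}, {}, {}, {(a, b, a)})"
    using assms by (auto simp: GES_traces_def ic_def ac_def All_less_Suc)
qed

lemma SES_singleton_trace_iff:
  "[x] \<in> SES_traces (E, C, R, D) \<longleftrightarrow> x \<in> E \<and> (x, x) \<notin> C \<and> ic R x = {}"
  by (auto simp: SES_traces_def dc_def)

lemma SES_pair_trace_iff:
  "[x, y] \<in> SES_traces (E, C, R, D) \<longleftrightarrow>
     x \<noteq> y \<and> x \<in> E \<and> y \<in> E \<and>
     (x, x) \<notin> C \<and> (x, y) \<notin> C \<and> (y, x) \<notin> C \<and> (y, y) \<notin> C \<and>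
     ic R x = {} \<and> ic R y - dc D {x} y \<subseteq> {x}"
  by (simp add: SES_traces_def dc_def All_less_Suc conj_commute conj_left_commute)

lemma SES_trace_swap:
  assumes "[x] \<in> SES_traces s" "[y] \<in> SES_traces s" "[x, y] \<in> SES_traces s"
  shows "[y, x] \<in> SES_traces s"
  using assms by (cases s) (auto simp: SES_singleton_trace_iff SES_pair_trace_iff)

theorem lemma13:
  fixes a b :: 'e
  assumes "a \<noteq> b"
  shows "GES_traces ({a, b}, {}, {}, {(a, b, a)}) = {[], [a], [b], [a, b]}
     \<and> \<not> (\<exists>\<sigma> :: 'e ses. is_SES \<sigma> \<and> SES_traces \<sigma> = GES_traces ({a, b}, {}, {}, {(a, b, a)}))"
proof (intro conjI notI)
  show traces: "GES_traces ({a, b}, {}, {}, {(a, b, a)}) = {[], [a], [b], [a, b]}"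
    using GES_traces_self_added_cause[OF assms] .
  assume "\<exists>\<sigma> :: 'e ses. is_SES \<sigma> \<and> SES_traces \<sigma> = GES_traces ({a, b}, {}, {}, {(a, b, a)})"
  then obtain \<sigma> :: "'e ses" where \<sigma>: "SES_traces \<sigma> = {[], [a], [b], [a, b]}"
    using traces by blast
  have "[b, a] \<in> SES_traces \<sigma>"
    by (rule SES_trace_swap) (simp_all add: \<sigma>)
  with \<sigma> assms show False by simp
qed

end
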